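(* Let $N,T\ge1$. Let $\bar{\boldsymbol{\Psi}}_{\mathrm{id}}=\mathrm{diag}(\bar\psi_{\mathrm{id},1},\dots,\bar\psi_{\mathrm{id},N})$ with all $\bar\psi_{\mathrm{id},i}>0$, let $\bar\psi_{\mathrm{f},1}>0$, let $\mathbf{w}_1\in\mathbb{R}^N\setminus\{\mathbf{0}\}$, let $\theta\in[0,1]$, and let $\alpha_1,\dots,\alpha_T>0$, $\beta_1,\dots,\beta_T>0$ with $\sum_t\alpha_t=\sum_t\beta_t=1$. For a nonzero $\mathbf{x}_0\in\mathbb{R}^N$ define $$\Upsilon(\mathbf{x}_0)=\frac{\sum_{t=1}^T(\alpha_t(1-\theta)+\beta_t\theta)^2\,\mathbf{x}_0^\top\left(\alpha_t\bar{\boldsymbol{\Psi}}_{\mathrm{id}}+\beta_t\bar\psi_{\mathrm{f},1}\mathbf{w}_1\mathbf{w}_1^\top\right)^{-1}\mathbf{x}_0}{\mathbf{x}_0^\top\left(\bar{\boldsymbol{\Psi}}_{\mathrm{id}}+\bar\psi_{\mathrm{f},1}\mathbf{w}_1\mathbf{w}_1^\top\right)^{-1}\mathbf{x}_0}.$$ Let $\gamma_t=\beta_t/\alpha_t$, $\eta_1=\bar\psi_{\mathrm{f},1}\mathbf{w}_1^\top\bar{\boldsymbol{\Psi}}_{\mathrm{id}}^{-1}\mathbf{w}_1$, and $\Delta=\sum_{t=1}^T\frac{\alpha_t(1-\theta(1-\gamma_t))^2(1-\gamma_t)}{1+\eta_1\gamma_t}$. Then $$\Upsilon(\mathbf{x}_0)=1+\theta^2\Big(\sum_{t=1}^T\frac{\beta_t^2}{\alpha_t}-1\Big)+\Delta\cdot\left(\frac{\mathbf{x}_0^\top\bar{\boldsymbol{\Psi}}_{\mathrm{id}}^{-1}\mathbf{x}_0}{(\mathbf{w}_1^\top\bar{\boldsymbol{\Psi}}_{\mathrm{id}}^{-1}\mathbf{x}_0)^2}\cdot\frac{1+\eta_1}{\bar\psi_{\mathrm{f},1}}-1\right)^{-1},$$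 where the last term is interpreted as $0$ when $\mathbf{w}_1^\top\bar{\boldsymbol{\Psi}}_{\mathrm{id}}^{-1}\mathbf{x}_0=0$.
   Context: Single index fund setting: time-$t$ price impact matrix $\mathbf{G}_t=\left(\alpha_t\bar{\boldsymbol{\Psi}}_{\mathrm{id}}+\beta_t\bar\psi_{\mathrm{f},1}\mathbf{w}_1\mathbf{w}_1^\top\right)^{-1}$, expected cost of a schedule $(\mathbf{v}_t)$ is $\sum_t\tfrac12\mathbf{v}_t^\top\mathbf{G}_t\mathbf{v}_t$. The numerator of $\Upsilon$ (times $\tfrac12$) is the cost of the separable schedule $\mathbf{v}_t^{\mathrm{sep}}=(\alpha_t(1-\theta)+\beta_t\theta)\mathbf{x}_0$, and the denominator (times $\tfrac12$) is the minimal cost of liquidating $\mathbf{x}_0$ subject to $\sum_t\mathbf{v}_t=\mathbf{x}_0$. $\theta$ is the fraction of traded volume attributable to index-fund investors. *)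

theory Defs
  imports "HOL-Analysis.Analysis"
begin

definition diag_mat :: "real^'n \<Rightarrow> real^'n^'n" where
  "diag_mat d = (\<chi> i j. if i = j then d $ i else 0)"

definition outer :: "real^'n \<Rightarrow> real^'n \<Rightarrow> real^'n^'n" where
  "outer u v = (\<chi> i j. u $ i * v $ j)"

definition qform :: "real^'n^'n \<Rightarrow> real^'n \<Rightarrow> real" where
  "qform M x = x \<bullet> (M *v x)"

definition Upsilon ::
  "real^'n \<Rightarrow> real \<Rightarrow> real^'n \<Rightarrow> real \<Rightarrow> nat \<Rightarrow> (nat \<Rightarrow> real) \<Rightarrow> (nat \<Rightarrow> real) \<Rightarrow> real^'n \<Rightarrow> real"
  where
  "Upsilon psi_id psi_f w theta T alpha beta x0 =
     (\<Sum>t=1..T. (alpha t * (1 - theta) + beta t * theta)^2 *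
        qform (matrix_inv (alpha t *\<^sub>R diag_mat psi_id + (beta t * psi_f) *\<^sub>R outer w w)) x0)
     / qform (matrix_inv (diag_mat psi_id + psi_f *\<^sub>R outer w w)) x0"

end

(*
  Both quadratic forms in Upsilon are evaluated by the Sherman-Morrison formula: for a
  diagonal D and a > 0, k >= 0,
    x' (a D + k w w')^-1 x = (q - k s^2 / (a + k e)) / a,
  where q = x' D^-1 x, s = w' D^-1 x and e = w' D^-1 w. With F = f s^2 / (1 + f e), the
  t-th summand of the numerator splits as (alpha_t (1 - theta) + beta_t theta)^2 / alpha_t
  times the denominator q - F, plus F times the t-th summand of Delta; the weights sum to
  1 + theta^2 (sum_t beta_t^2 / alpha_t - 1) because sum alpha = sum beta = 1. Cauchy-Schwarz,
  s^2 <= e q, makes q - F positive, and F / (q - F) is the inverse in the statement.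
*)
theory Submission
  imports Defs
begin

lemma matrix_inv_eqI:
  fixes A B :: "'a::comm_ring_1^'n^'n"
  assumes "A ** B = mat 1" and "B ** A = mat 1"
  shows "matrix_inv A = B"
proof -
  have inv: "A ** matrix_inv A = mat 1 \<and> matrix_inv A ** A = mat 1"
    unfolding matrix_inv_def using assms by (rule someI[where x = B, OF conjI])
  have "matrix_inv A = matrix_inv A ** (A ** B)"
    using assms by simp
  also have "\<dots> = B"
    using inv by (simp add: matrix_mul_assoc)
  finally show ?thesis .
qed

lemma matrix_add_rdistrib: "(A + B) ** C = A ** C + B ** C"
  by (simp add: matrix_matrix_mult_def vec_eq_iff sum.distrib distrib_right)

lemma matrix_diff_ldistrib:
  fixes A :: "'a::ring_1^'n^'m"
  shows "A ** (B - C) = A ** B - A ** C"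
  by (simp add: matrix_matrix_mult_def vec_eq_iff sum_subtractf right_diff_distrib)

lemma matrix_diff_rdistrib:
  fixes A :: "'a::ring_1^'n^'m"
  shows "(A - B) ** C = A ** C - B ** C"
  by (simp add: matrix_matrix_mult_def vec_eq_iff sum_subtractf left_diff_distrib)

lemma outer_mult_vec: "outer u v *v x = (v \<bullet> x) *\<^sub>R u"
  by (simp add: outer_def vec_eq_iff matrix_vector_mult_def inner_vec_def sum_distrib_left mult_ac)

lemma matrix_mul_outer: "A ** outer u v = outer (A *v u) v"
  by (simp add: outer_def vec_eq_iff matrix_matrix_mult_def matrix_vector_mult_def sum_distrib_left mult_ac)

lemma outer_matrix_mul: "outer u v ** A = outer u (v v* A)"
  by (simp add: outer_def vec_eq_iff matrix_matrix_mult_def vector_matrix_mult_def sum_distrib_left mult_ac)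

lemma outer_scaleR_left: "outer (c *\<^sub>R u) v = c *\<^sub>R outer u v"
  by (simp add: outer_def vec_eq_iff)

lemma matrix_mul_scaleR_right:
  fixes A :: "('a::real_algebra_1)^'m^'n"
  shows "A ** (k *\<^sub>R B) = k *\<^sub>R (A ** B)"
  by (simp add: matrix_scalar_ac scalar_matrix_assoc)

lemma matrix_inv_rank_one_update:
  fixes A B :: "real^'n^'n" and u v :: "real^'n"
  assumes AB: "A ** B = mat 1" and BA: "B ** A = mat 1"
    and nonsingular: "1 + v \<bullet> (B *v u) \<noteq> 0"
  shows "matrix_inv (A + outer u v)
       = B - (1 / (1 + v \<bullet> (B *v u))) *\<^sub>R outer (B *v u) (v v* B)"
proof (rule matrix_inv_eqI)
  define c where "c = 1 + v \<bullet> (B *v u)"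
  define p where "p = B *v u"
  define r where "r = v v* B"
  have cancel: "X - (1 / c) *\<^sub>R (X + (v \<bullet> p) *\<^sub>R X) = 0" for X :: "real^'n^'n"
  proof -
    have "X + (v \<bullet> p) *\<^sub>R X = c *\<^sub>R X"
      by (simp add: c_def p_def algebra_simps)
    then show ?thesis
      using nonsingular by (simp add: c_def)
  qed
  have Ap: "A *v p = u" and rA: "r v* A = v" and ru: "r \<bullet> u = v \<bullet> p"
    using AB BA by (simp_all add: p_def r_def matrix_vector_mul_assoc vector_matrix_mul_assoc
        dot_lmul_matrix)
  have "(A + outer u v) ** (B - (1 / c) *\<^sub>R outer p r)
      = A ** B + outer u v ** B - (1 / c) *\<^sub>R (A ** outer p r + outer u v ** outer p r)"
    by (simp only: matrix_add_ldistrib matrix_add_rdistrib matrix_diff_ldistrib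
        matrix_mul_scaleR_right add_diff_eq)
  also have "\<dots> = mat 1 + (outer u r - (1 / c) *\<^sub>R (outer u r + (v \<bullet> p) *\<^sub>R outer u r))"
    by (simp only: AB Ap r_def matrix_mul_outer outer_matrix_mul outer_mult_vec outer_scaleR_left add_diff_eq)
  finally show "(A + outer u v) ** (B - (1 / c) *\<^sub>R outer p r) = mat 1"
    by (simp only: cancel add_0_right)
  have "(B - (1 / c) *\<^sub>R outer p r) ** (A + outer u v)
      = B ** A + B ** outer u v - (1 / c) *\<^sub>R (outer p r ** A + outer p r ** outer u v)"
    by (simp only: matrix_add_ldistrib matrix_diff_rdistrib scalar_matrix_assoc[symmetric])
      (simp add: algebra_simps)
  also have "\<dots> = mat 1 + (outer p v - (1 / c) *\<^sub>R (outer p v + (v \<bullet> p) *\<^sub>R outer p v))"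
    by (simp only: BA rA ru p_def matrix_mul_outer outer_matrix_mul outer_mult_vec outer_scaleR_left add_diff_eq)
  finally show "(B - (1 / c) *\<^sub>R outer p r) ** (A + outer u v) = mat 1"
    by (simp only: cancel add_0_right)
qed

lemma diag_mat_mult_vec: "diag_mat d *v x = d * x"
  by (simp add: diag_mat_def vec_eq_iff matrix_vector_mult_def if_distrib[where f="\<lambda>a. a * _"]
      cong: if_cong)

lemma vector_mult_diag_mat: "x v* diag_mat d = d * x"
  by (simp add: diag_mat_def vec_eq_iff vector_matrix_mult_def if_distrib[where f="\<lambda>a. _ * a"]
      mult.commute cong: if_cong)

lemma diag_mat_mul: "diag_mat d ** diag_mat e = diag_mat (d * e)"
  by (simp add: diag_mat_def vec_eq_iff matrix_matrix_mult_def if_distrib[where f="\<lambda>a. a * _"]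
      cong: if_cong)

lemma diag_mat_one: "diag_mat 1 = mat 1"
  unfolding diag_mat_def mat_def by (simp add: vec_eq_iff)

lemma matrix_inv_diag_mat:
  assumes "\<forall>i. d $ i \<noteq> 0"
  shows "matrix_inv (diag_mat d) = diag_mat (\<chi> i. inverse (d $ i))"
proof (rule matrix_inv_eqI)
  have "d * (\<chi> i. inverse (d $ i)) = 1" and "(\<chi> i. inverse (d $ i)) * d = 1"
    using assms by (simp_all add: vec_eq_iff)
  then show "diag_mat d ** diag_mat (\<chi> i. inverse (d $ i)) = mat 1"
    and "diag_mat (\<chi> i. inverse (d $ i)) ** diag_mat d = mat 1"
    by (simp_all add: diag_mat_mul diag_mat_one)
qed

lemma inner_diag_mat_commute: "x \<bullet> (diag_mat d *v y) = y \<bullet> (diag_mat d *v x)"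
  by (simp add: diag_mat_mult_vec inner_vec_def mult_ac)

lemma qform_matrix_inv_diag_rank_one_update:
  fixes d w x :: "real^'n"
  assumes d: "\<forall>i. d $ i \<noteq> 0" and a: "a \<noteq> 0"
    and nonsingular: "a + k * qform (matrix_inv (diag_mat d)) w \<noteq> 0"
  defines "Dinv \<equiv> matrix_inv (diag_mat d)"
  shows "qform (matrix_inv (a *\<^sub>R diag_mat d + k *\<^sub>R outer w w)) x
       = (qform Dinv x - k * (w \<bullet> (Dinv *v x))\<^sup>2 / (a + k * qform Dinv w)) / a"
proof -
  define A where "A = a *\<^sub>R diag_mat d"
  define B where "B = (1 / a) *\<^sub>R Dinv"
  define c where "c = 1 + w \<bullet> (B *v (k *\<^sub>R w))"
  have Dinv: "Dinv = diag_mat (\<chi> i. inverse (d $ i))"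
    unfolding Dinv_def using d by (rule matrix_inv_diag_mat)
  have "d * (\<chi> i. inverse (d $ i)) = 1" and "(\<chi> i. inverse (d $ i)) * d = 1"
    using d by (simp_all add: vec_eq_iff)
  then have "A ** B = mat 1" and "B ** A = mat 1"
    using a by (simp_all add: A_def B_def Dinv diag_mat_mul diag_mat_one matrix_mul_scaleR_right
        scalar_matrix_assoc[symmetric])
  moreover have c: "c = (a + k * qform Dinv w) / a"
    using a by (simp add: c_def B_def qform_def scaleR_matrix_vector_assoc[symmetric]
        matrix_vector_mult_scaleR add_divide_distrib)
  ultimately have inv: "matrix_inv (A + outer (k *\<^sub>R w) w)
      = B - (1 / c) *\<^sub>R outer (B *v (k *\<^sub>R w)) (w v* B)"
    using a nonsingular unfolding c_def Dinv_def by (intro matrix_inv_rank_one_update) auto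
  have "qform (matrix_inv (A + outer (k *\<^sub>R w) w)) x
      = x \<bullet> (B *v x) - ((w v* B) \<bullet> x) * (x \<bullet> (B *v (k *\<^sub>R w))) / c"
    unfolding qform_def inv
    by (simp add: outer_mult_vec scaleR_matrix_vector_assoc[symmetric] algebra_simps)
  also have "\<dots> = qform Dinv x / a - k * (w \<bullet> (Dinv *v x) / a)\<^sup>2 / c"
  proof -
    have "w v* Dinv = Dinv *v w"
      by (simp add: Dinv vector_mult_diag_mat diag_mat_mult_vec)
    moreover have "x \<bullet> (Dinv *v w) = w \<bullet> (Dinv *v x)"
      unfolding Dinv by (rule inner_diag_mat_commute)
    ultimately show ?thesis
      by (simp add: B_def qform_def vector_scaleR_matrix_ac matrix_vector_mult_scaleR
          scaleR_matrix_vector_assoc[symmetric] inner_commute[of _ x] power2_eq_square)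
  qed
  also have "\<dots> = (qform Dinv x - k * (w \<bullet> (Dinv *v x))\<^sup>2 / (a + k * qform Dinv w)) / a"
    using a nonsingular by (simp add: c Dinv_def[symmetric] power2_eq_square diff_divide_distrib)
  finally show ?thesis
    by (simp add: A_def outer_scaleR_left)
qed

lemma qform_diag_mat: "qform (diag_mat v) x = (\<Sum>i\<in>UNIV. v $ i * (x $ i)\<^sup>2)"
  by (simp add: qform_def diag_mat_mult_vec inner_vec_def power2_eq_square mult_ac)

lemma qform_diag_mat_nonneg:
  assumes "\<forall>i. v $ i \<ge> 0"
  shows "qform (diag_mat v) x \<ge> 0"
  unfolding qform_diag_mat using assms by (simp add: sum_nonneg)

lemma qform_diag_mat_pos:
  assumes "\<forall>i. v $ i > 0" and "x \<noteq> 0"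
  shows "qform (diag_mat v) x > 0"
proof -
  obtain j where "x $ j \<noteq> 0"
    using assms(2) by (auto simp: vec_eq_iff)
  then have "v $ j * (x $ j)\<^sup>2 > 0"
    using assms(1) by simp
  moreover have "\<forall>i. v $ i * (x $ i)\<^sup>2 \<ge> 0"
    using assms(1) by (simp add: less_imp_le)
  ultimately show ?thesis
    unfolding qform_diag_mat by (intro sum_pos2[of UNIV j]) auto
qed

lemma inner_diag_mat_square_le:
  assumes "\<forall>i. v $ i \<ge> 0"
  shows "(y \<bullet> (diag_mat v *v x))\<^sup>2 \<le> qform (diag_mat v) y * qform (diag_mat v) x"
proof -
  define r where "r = (\<chi> i. sqrt (v $ i))"
  have "diag_mat v *v z = r * (r * z)" for z
    using assms by (simp add: diag_mat_mult_vec r_def vec_eq_iff mult.assoc[symmetric])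
  then have "u \<bullet> (diag_mat v *v z) = (r * u) \<bullet> (r * z)" for u z
    by (simp add: inner_vec_def mult_ac)
  then show ?thesis
    unfolding qform_def by (simp only: Cauchy_Schwarz_ineq)
qed

lemma schedule_term_split:
  fixes a b f e q s \<theta> :: real
  assumes a: "a \<noteq> 0" and D2: "a + b * f * e \<noteq> 0" and D1: "1 + f * e \<noteq> 0"
  shows "(a * (1 - \<theta>) + b * \<theta>)\<^sup>2 * ((q - b * f * s\<^sup>2 / (a + b * f * e)) / a)
       = (a * (1 - \<theta>) + b * \<theta>)\<^sup>2 / a * (q - f * s\<^sup>2 / (1 + f * e))
         + f * s\<^sup>2 / (1 + f * e)
           * (a * (1 - \<theta> * (1 - b / a))\<^sup>2 * (1 - b / a) / (1 + f * e * (b / a)))"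
proof -
  define P where "P = a * (1 - \<theta>) + b * \<theta>"
  define D1 where "D1 = 1 + f * e"
  define D2 where "D2 = a + b * f * e"
  have "f * s\<^sup>2 / D1 - f * s\<^sup>2 / D1 * ((a - b) / D2) = f * s\<^sup>2 / D1 * ((D2 - (a - b)) / D2)"
    using D1 D2 unfolding D1_def[symmetric] D2_def[symmetric] by (simp add: field_simps)
  also have "D2 - (a - b) = b * D1"
    by (simp add: D1_def D2_def algebra_simps)
  also have "f * s\<^sup>2 / D1 * (b * D1 / D2) = b * f * s\<^sup>2 / D2"
    using D1 unfolding D1_def[symmetric] by simp
  finally have split_update: "b * f * s\<^sup>2 / D2 = f * s\<^sup>2 / D1 - f * s\<^sup>2 / D1 * ((a - b) / D2)" ..
  have split_weight: "a * (1 - \<theta> * (1 - b / a))\<^sup>2 * (1 - b / a) / (1 + f * e * (b / a))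
      = P\<^sup>2 / a * ((a - b) / D2)"
  proof -
    have "1 - \<theta> * (1 - b / a) = P / a" and "1 - b / a = (a - b) / a"
      and "1 + f * e * (b / a) = D2 / a"
      using a by (simp_all add: P_def D2_def field_simps)
    then show ?thesis
      using a D2 unfolding D2_def[symmetric] by (simp add: field_simps power2_eq_square)
  qed
  show ?thesis
    using a D1 D2
    unfolding P_def[symmetric] D1_def[symmetric] D2_def[symmetric] split_update split_weight
    by (simp add: field_simps)
qed

lemma sum_schedule_square_div:
  fixes \<alpha> \<beta> :: "nat \<Rightarrow> real" and \<theta> :: real
  assumes "\<forall>t\<in>{1..T}. \<alpha> t \<noteq> 0"
    and "(\<Sum>t=1..T. \<alpha> t) = 1" and "(\<Sum>t=1..T. \<beta> t) = 1"
  shows "(\<Sum>t=1..T. (\<alpha> t * (1 - \<theta>) + \<beta> t * \<theta>)\<^sup>2 / \<alpha> t)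
       = 1 + \<theta>\<^sup>2 * ((\<Sum>t=1..T. (\<beta> t)\<^sup>2 / \<alpha> t) - 1)"
proof -
  have "(\<Sum>t=1..T. (\<alpha> t * (1 - \<theta>) + \<beta> t * \<theta>)\<^sup>2 / \<alpha> t)
      = (\<Sum>t=1..T. (1 - \<theta>)\<^sup>2 * \<alpha> t + 2 * \<theta> * (1 - \<theta>) * \<beta> t
                    + \<theta>\<^sup>2 * ((\<beta> t)\<^sup>2 / \<alpha> t))"
    using assms(1) by (intro sum.cong) (auto simp: field_simps power2_eq_square)
  also have "\<dots> = (1 - \<theta>)\<^sup>2 + 2 * \<theta> * (1 - \<theta>) + \<theta>\<^sup>2 * (\<Sum>t=1..T. (\<beta> t)\<^sup>2 / \<alpha> t)"
    unfolding sum.distrib sum_distrib_left[symmetric] assms(2,3) by simp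
  also have "\<dots> = 1 + \<theta>\<^sup>2 * ((\<Sum>t=1..T. (\<beta> t)\<^sup>2 / \<alpha> t) - 1)"
    by (simp add: algebra_simps power2_eq_square)
  finally show ?thesis .
qed

lemma rank_one_correction_lt:
  fixes f e q s :: real
  assumes "f \<ge> 0" and "e \<ge> 0" and "q > 0" and "s\<^sup>2 \<le> e * q"
  shows "f * s\<^sup>2 / (1 + f * e) < q"
proof -
  have "f * s\<^sup>2 \<le> f * e * q"
    using assms by (simp add: mult_left_mono mult.assoc)
  also have "\<dots> < q * (1 + f * e)"
    using assms by (simp add: algebra_simps)
  finally show ?thesis
    using assms by (simp add: divide_less_eq add_pos_nonneg)
qed

lemma sum_schedule_term_split:
  fixes f e q s \<theta> :: real and \<alpha> \<beta> :: "nat \<Rightarrow> real"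
  assumes f: "f \<ge> 0" and e: "e \<ge> 0"
    and \<alpha>: "\<forall>t\<in>{1..T}. \<alpha> t > 0" and \<beta>: "\<forall>t\<in>{1..T}. \<beta> t \<ge> 0"
    and \<alpha>_sum: "(\<Sum>t=1..T. \<alpha> t) = 1" and \<beta>_sum: "(\<Sum>t=1..T. \<beta> t) = 1"
  shows "(\<Sum>t=1..T. (\<alpha> t * (1 - \<theta>) + \<beta> t * \<theta>)\<^sup>2
            * ((q - \<beta> t * f * s\<^sup>2 / (\<alpha> t + \<beta> t * f * e)) / \<alpha> t))
       = (1 + \<theta>\<^sup>2 * ((\<Sum>t=1..T. (\<beta> t)\<^sup>2 / \<alpha> t) - 1)) * (q - f * s\<^sup>2 / (1 + f * e))
         + f * s\<^sup>2 / (1 + f * e)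
           * (\<Sum>t=1..T. \<alpha> t * (1 - \<theta> * (1 - \<beta> t / \<alpha> t))\<^sup>2 * (1 - \<beta> t / \<alpha> t)
                          / (1 + f * e * (\<beta> t / \<alpha> t)))"
proof -
  have fe: "1 + f * e > 0"
    using f e by (simp add: add_pos_nonneg)
  have "(\<Sum>t=1..T. (\<alpha> t * (1 - \<theta>) + \<beta> t * \<theta>)\<^sup>2
            * ((q - \<beta> t * f * s\<^sup>2 / (\<alpha> t + \<beta> t * f * e)) / \<alpha> t))
      = (\<Sum>t=1..T. (\<alpha> t * (1 - \<theta>) + \<beta> t * \<theta>)\<^sup>2 / \<alpha> t * (q - f * s\<^sup>2 / (1 + f * e))
            + f * s\<^sup>2 / (1 + f * e)
              * (\<alpha> t * (1 - \<theta> * (1 - \<beta> t / \<alpha> t))\<^sup>2 * (1 - \<beta> t / \<alpha> t)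
                 / (1 + f * e * (\<beta> t / \<alpha> t))))"
  proof (rule sum.cong[OF refl], rule schedule_term_split)
    fix t assume "t \<in> {1..T}"
    then have "\<alpha> t > 0" and "\<beta> t \<ge> 0"
      using \<alpha> \<beta> by auto
    then show "\<alpha> t \<noteq> 0" and "\<alpha> t + \<beta> t * f * e \<noteq> 0"
      using f e by (simp_all add: add_pos_nonneg less_imp_neq[symmetric])
  qed (use fe in simp)
  also have "(\<Sum>t=1..T. (\<alpha> t * (1 - \<theta>) + \<beta> t * \<theta>)\<^sup>2 / \<alpha> t)
      = 1 + \<theta>\<^sup>2 * ((\<Sum>t=1..T. (\<beta> t)\<^sup>2 / \<alpha> t) - 1)"
    using \<alpha> \<alpha>_sum \<beta>_sum by (intro sum_schedule_square_div) auto
  ultimately show ?thesis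
    by (simp only: sum.distrib sum_distrib_left[symmetric] sum_distrib_right[symmetric])
qed

lemma rank_one_correction_ratio:
  fixes f D q s :: real
  assumes "f > 0" and "D > 0" and "f * s\<^sup>2 / D < q" and "s \<noteq> 0"
  shows "f * s\<^sup>2 / D / (q - f * s\<^sup>2 / D) = inverse (q / s\<^sup>2 * (D / f) - 1)"
proof -
  have "q * D - f * s\<^sup>2 > 0"
    using assms by (simp add: field_simps)
  moreover have "q - f * s\<^sup>2 / D = (q * D - f * s\<^sup>2) / D"
    and "q / s\<^sup>2 * (D / f) - 1 = (q * D - f * s\<^sup>2) / (f * s\<^sup>2)"
    using assms by (simp_all add: field_simps)
  ultimately show ?thesis
    using assms by simp
qed

lemma schedule_cost_ratio:
  fixes f e q s \<theta> :: real and \<alpha> \<beta> :: "nat \<Rightarrow> real"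
  assumes f: "f > 0" and e: "e \<ge> 0" and q: "q > 0" and cauchy_schwarz: "s\<^sup>2 \<le> e * q"
    and \<alpha>: "\<forall>t\<in>{1..T}. \<alpha> t > 0" and \<beta>: "\<forall>t\<in>{1..T}. \<beta> t \<ge> 0"
    and \<alpha>_sum: "(\<Sum>t=1..T. \<alpha> t) = 1" and \<beta>_sum: "(\<Sum>t=1..T. \<beta> t) = 1"
  shows "(\<Sum>t=1..T. (\<alpha> t * (1 - \<theta>) + \<beta> t * \<theta>)\<^sup>2
            * ((q - \<beta> t * f * s\<^sup>2 / (\<alpha> t + \<beta> t * f * e)) / \<alpha> t))
         / (q - f * s\<^sup>2 / (1 + f * e))
       = 1 + \<theta>\<^sup>2 * ((\<Sum>t=1..T. (\<beta> t)\<^sup>2 / \<alpha> t) - 1)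
         + (if s = 0 then 0
            else (\<Sum>t=1..T. \<alpha> t * (1 - \<theta> * (1 - \<beta> t / \<alpha> t))\<^sup>2 * (1 - \<beta> t / \<alpha> t)
                             / (1 + f * e * (\<beta> t / \<alpha> t)))
                 * inverse (q / s\<^sup>2 * ((1 + f * e) / f) - 1))"
proof -
  define K where "K = 1 + \<theta>\<^sup>2 * ((\<Sum>t=1..T. (\<beta> t)\<^sup>2 / \<alpha> t) - 1)"
  define \<Delta> where "\<Delta> = (\<Sum>t=1..T. \<alpha> t * (1 - \<theta> * (1 - \<beta> t / \<alpha> t))\<^sup>2 * (1 - \<beta> t / \<alpha> t)
                             / (1 + f * e * (\<beta> t / \<alpha> t)))"
  define F where "F = f * s\<^sup>2 / (1 + f * e)"
  have fe: "1 + f * e > 0"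
    using f e by (simp add: add_pos_nonneg)
  have F_lt: "F < q"
    unfolding F_def using f by (intro rank_one_correction_lt e q cauchy_schwarz) simp
  have "(\<Sum>t=1..T. (\<alpha> t * (1 - \<theta>) + \<beta> t * \<theta>)\<^sup>2
            * ((q - \<beta> t * f * s\<^sup>2 / (\<alpha> t + \<beta> t * f * e)) / \<alpha> t))
         / (q - F) = (K * (q - F) + F * \<Delta>) / (q - F)"
    unfolding K_def \<Delta>_def F_def using f e \<alpha> \<beta> \<alpha>_sum \<beta>_sum
    by (subst sum_schedule_term_split) (auto simp: less_imp_le)
  also have "\<dots> = K + \<Delta> * (F / (q - F))"
    using F_lt by (simp add: field_simps)
  also have "F / (q - F) = (if s = 0 then 0 else inverse (q / s\<^sup>2 * ((1 + f * e) / f) - 1))"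
    using rank_one_correction_ratio[OF f fe F_lt[unfolded F_def]] unfolding F_def by simp
  finally show ?thesis
    by (simp add: K_def \<Delta>_def F_def)
qed

lemma Upsilon_eq_rank_one_updates:
  fixes psi_id w x0 :: "real^'n" and alpha beta :: "nat \<Rightarrow> real"
  assumes psi_pos: "\<forall>i. psi_id $ i > 0" and psi_f: "psi_f \<ge> 0"
    and alpha_pos: "\<forall>t\<in>{1..T}. alpha t > 0" and beta_nonneg: "\<forall>t\<in>{1..T}. beta t \<ge> 0"
  defines "Pinv \<equiv> matrix_inv (diag_mat psi_id)"
  shows "Upsilon psi_id psi_f w theta T alpha beta x0
       = (\<Sum>t=1..T. (alpha t * (1 - theta) + beta t * theta)\<^sup>2
            * ((qform Pinv x0 - beta t * psi_f * (w \<bullet> (Pinv *v x0))\<^sup>2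
                 / (alpha t + beta t * psi_f * qform Pinv w)) / alpha t))
         / (qform Pinv x0 - psi_f * (w \<bullet> (Pinv *v x0))\<^sup>2 / (1 + psi_f * qform Pinv w))"
proof -
  have "qform Pinv w \<ge> 0"
    using psi_pos unfolding Pinv_def
    by (simp add: matrix_inv_diag_mat less_imp_neq[symmetric] qform_diag_mat_nonneg less_imp_le)
  then have qform_inv: "qform (matrix_inv (a *\<^sub>R diag_mat psi_id + k *\<^sub>R outer w w)) x0
      = (qform Pinv x0 - k * (w \<bullet> (Pinv *v x0))\<^sup>2 / (a + k * qform Pinv w)) / a"
    if "a > 0" and "k \<ge> 0" for a k
    using that psi_pos unfolding Pinv_def
    by (intro qform_matrix_inv_diag_rank_one_update) (auto simp: less_imp_neq[symmetric] add_pos_nonneg)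
  have "qform (matrix_inv (alpha t *\<^sub>R diag_mat psi_id + (beta t * psi_f) *\<^sub>R outer w w)) x0
      = (qform Pinv x0 - beta t * psi_f * (w \<bullet> (Pinv *v x0))\<^sup>2
           / (alpha t + beta t * psi_f * qform Pinv w)) / alpha t"
    if "t \<in> {1..T}" for t
    using that alpha_pos beta_nonneg psi_f by (intro qform_inv) auto
  moreover have "qform (matrix_inv (diag_mat psi_id + psi_f *\<^sub>R outer w w)) x0
      = qform Pinv x0 - psi_f * (w \<bullet> (Pinv *v x0))\<^sup>2 / (1 + psi_f * qform Pinv w)"
    using qform_inv[of 1 psi_f] psi_f by simp
  ultimately show ?thesis
    unfolding Upsilon_def by simp
qed

theorem proposition5:
  fixes psi_id :: "real^'n" and psi_f :: real and w x0 :: "real^'n"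
    and theta :: real and T :: nat and alpha beta :: "nat \<Rightarrow> real"
  assumes psi_pos: "\<forall>i. psi_id $ i > 0"
    and psi_f_pos: "psi_f > 0"
    and w_nz: "w \<noteq> 0"
    and theta: "0 \<le> theta" "theta \<le> 1"
    and T: "T \<ge> 1"
    and alpha_pos: "\<forall>t\<in>{1..T}. alpha t > 0"
    and beta_pos: "\<forall>t\<in>{1..T}. beta t > 0"
    and alpha_sum: "(\<Sum>t=1..T. alpha t) = 1"
    and beta_sum: "(\<Sum>t=1..T. beta t) = 1"
    and x0_nz: "x0 \<noteq> 0"
  shows
    "let Pinv = matrix_inv (diag_mat psi_id);
         gamma = (\<lambda>t. beta t / alpha t);
         eta = psi_f * (w \<bullet> (Pinv *v w));
         Delta = (\<Sum>t=1..T. alpha t * (1 - theta * (1 - gamma t))^2 * (1 - gamma t)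
                              / (1 + eta * gamma t));
         s = w \<bullet> (Pinv *v x0)
     in Upsilon psi_id psi_f w theta T alpha beta x0 =
          1 + theta^2 * ((\<Sum>t=1..T. (beta t)^2 / alpha t) - 1)
          + (if s = 0 then 0
             else Delta * inverse (qform Pinv x0 / s^2 * ((1 + eta) / psi_f) - 1))"
proof -
  define Pinv where "Pinv = matrix_inv (diag_mat psi_id)"
  define v where "v = (\<chi> i. inverse (psi_id $ i))"
  have v_pos: "\<forall>i. v $ i > 0" and Pinv: "Pinv = diag_mat v"
    using psi_pos by (simp_all add: v_def Pinv_def matrix_inv_diag_mat less_imp_neq[symmetric])
  have e: "qform Pinv w \<ge> 0"
    using v_pos by (simp add: Pinv qform_diag_mat_nonneg less_imp_le)
  have q: "qform Pinv x0 > 0"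
    using v_pos x0_nz by (simp add: Pinv qform_diag_mat_pos)
  have cauchy_schwarz: "(w \<bullet> (Pinv *v x0))\<^sup>2 \<le> qform Pinv w * qform Pinv x0"
    unfolding Pinv using v_pos by (intro inner_diag_mat_square_le) (simp add: less_imp_le)
  have beta_nonneg: "\<forall>t\<in>{1..T}. beta t \<ge> 0"
    using beta_pos by (simp add: less_imp_le)
  with psi_pos psi_f_pos alpha_pos
  have "Upsilon psi_id psi_f w theta T alpha beta x0
      = (\<Sum>t=1..T. (alpha t * (1 - theta) + beta t * theta)\<^sup>2
            * ((qform Pinv x0 - beta t * psi_f * (w \<bullet> (Pinv *v x0))\<^sup>2
                 / (alpha t + beta t * psi_f * qform Pinv w)) / alpha t))
         / (qform Pinv x0 - psi_f * (w \<bullet> (Pinv *v x0))\<^sup>2 / (1 + psi_f * qform Pinv w))"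
    unfolding Pinv_def by (intro Upsilon_eq_rank_one_updates) auto
  also note schedule_cost_ratio[OF psi_f_pos e q cauchy_schwarz alpha_pos beta_nonneg alpha_sum beta_sum]
  finally show ?thesis
    by (simp add: Let_def Pinv_def[symmetric] qform_def mult.assoc)
qed

end
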